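(* The divergence problem for random walks with dynamic weights is undecidable: there is no algorithm that, given computable weight functions $W(n,n+1)$, $W(n,n-1)$ (for $n\geq1$) defining a random walk $\mathcal M$ on $\mathbb{N}$, an initial state $s_0\in\mathbb{N}$ and a finite target set $A\subseteq\mathbb{N}$, decides whether $\mathcal M$ is divergent with respect to $s_0$ and $A$.
   Context: A random walk with dynamic weights is given by computable functions $n\mapsto W(n,n+1)\in\mathbb{Q}_{>0}$ and $n\mapsto W(n,n-1)\in\mathbb{Q}_{>0}$ for $n\geq 1$; its Markov chain has state set $\mathbb{N}$, $p(0,1)=1$, and for $n>0$, $p(n,n+1)=\frac{W(n,n+1)}{W(n,n+1)+W(n,n-1)}$ and $p(n,n-1)=\frac{W(n,n-1)}{W(n,n+1)+W(n,n-1)}$. For a Markov chain $\mathcal M=(S,p)$, $Post^*_{\mathcal M}(X)$ is the set of states reachable from $X$ and $\mathbf{Pr}_{\mathcal M,s}(\mathbf{F}X)$ is the probability that the random path from $s$ ever (including time 0) is in $X$. $\mathcal M$ is divergent w.r.t. $s_0$ and $A$ if there exist computable $f_0,f_1:S\to\mathbb{R}_{\geq0}$ with: (a) for all $0<\theta<1$, $\mathbf{Pr}_{\mathcal M,s_0}(\mathbf{F}f_0^{-1}([0,\theta]))\leq\theta$; (b) for all $s$, $\mathbf{Pr}_{\mathcal M,s}(\mathbf{F}A)\leq f_1(s)$; (c) for all $0<\theta<1$, $\{s\mid f_0(s)\geq\theta\wedge f_1(s)\geq\theta\}\cap Post^*_{\mathcal M}(\{s_0\})$ is finite. *)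

theory Defs
  imports Complex_Main "HOL-Library.Nat_Bijection"
begin

datatype recf = Z | Sc | Proj nat | Comp recf "recf list" | Prim recf recf | Mn recf

inductive eval :: "recf \<Rightarrow> nat list \<Rightarrow> nat \<Rightarrow> bool" where
  eval_Z: "eval Z xs 0"
| eval_Sc: "eval Sc (x # xs) (Suc x)"
| eval_Proj: "n < length xs \<Longrightarrow> eval (Proj n) xs (xs ! n)"
| eval_Comp: "list_all2 (\<lambda>g y. eval g xs y) gs ys \<Longrightarrow> eval f ys z \<Longrightarrow> eval (Comp f gs) xs z"
| eval_Prim0: "eval f xs z \<Longrightarrow> eval (Prim f g) (0 # xs) z"
| eval_PrimS: "eval (Prim f g) (n # xs) y \<Longrightarrow> eval g (y # n # xs) z \<Longrightarrow> eval (Prim f g) (Suc n # xs) z"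
| eval_Mn: "eval f (n # xs) 0 \<Longrightarrow> (\<forall>m<n. \<exists>y. eval f (m # xs) y \<and> y \<noteq> 0) \<Longrightarrow> eval (Mn f) xs n"
monos list_all2_mono

fun recf_encode :: "recf \<Rightarrow> nat" where
  "recf_encode Z = prod_encode (0, 0)"
| "recf_encode Sc = prod_encode (1, 0)"
| "recf_encode (Proj n) = prod_encode (2, n)"
| "recf_encode (Comp f gs) = prod_encode (3, prod_encode (recf_encode f, list_encode (map recf_encode gs)))"
| "recf_encode (Prim f g) = prod_encode (4, prod_encode (recf_encode f, recf_encode g))"
| "recf_encode (Mn f) = prod_encode (5, recf_encode f)"

text \<open>A natural number v codes the positive rational a/b where (a,b) = prod_decode v, a,b > 0.\<close>
definition pos_rat_code :: "nat \<Rightarrow> bool" where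
  "pos_rat_code v \<longleftrightarrow> fst (prod_decode v) > 0 \<and> snd (prod_decode v) > 0"

definition rat_of_code :: "nat \<Rightarrow> real" where
  "rat_of_code v = real (fst (prod_decode v)) / real (snd (prod_decode v))"

definition weight_prog :: "recf \<Rightarrow> bool" where
  "weight_prog p \<longleftrightarrow> (\<forall>n. \<exists>v. eval p [n] v) \<and> (\<forall>n v. eval p [n] v \<longrightarrow> pos_rat_code v)"

definition prog_weight :: "recf \<Rightarrow> nat \<Rightarrow> real" where
  "prog_weight p n = (THE r. \<exists>v. eval p [n] v \<and> r = rat_of_code v)"

definition approx_of_code :: "nat \<Rightarrow> real" where
  "approx_of_code v = real (fst (prod_decode v)) / real (Suc (snd (prod_decode v)))"

definition computable_real_fun :: "(nat \<Rightarrow> real) \<Rightarrow> bool" where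
  "computable_real_fun f \<longleftrightarrow> (\<exists>q. \<forall>s k. (\<exists>v. eval q [s, k] v) \<and>
      (\<forall>v. eval q [s, k] v \<longrightarrow> \<bar>f s - approx_of_code v\<bar> \<le> 1 / 2 ^ k))"

definition rw_p :: "(nat \<Rightarrow> real) \<Rightarrow> (nat \<Rightarrow> real) \<Rightarrow> nat \<Rightarrow> nat \<Rightarrow> real" where
  "rw_p Wu Wd n m =
     (if n = 0 then (if m = 1 then 1 else 0)
      else if m = Suc n then Wu n / (Wu n + Wd n)
      else if m = n - 1 then Wd n / (Wu n + Wd n)
      else 0)"

fun reach_within :: "(nat \<Rightarrow> real) \<Rightarrow> (nat \<Rightarrow> real) \<Rightarrow> nat set \<Rightarrow> nat \<Rightarrow> nat \<Rightarrow> real" where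
  "reach_within Wu Wd X 0 s = (if s \<in> X then 1 else 0)"
| "reach_within Wu Wd X (Suc k) s =
     (if s \<in> X then 1
      else if s = 0 then reach_within Wu Wd X k 1
      else rw_p Wu Wd s (Suc s) * reach_within Wu Wd X k (Suc s)
         + rw_p Wu Wd s (s - 1) * reach_within Wu Wd X k (s - 1))"

definition PrF :: "(nat \<Rightarrow> real) \<Rightarrow> (nat \<Rightarrow> real) \<Rightarrow> nat \<Rightarrow> nat set \<Rightarrow> real" where
  "PrF Wu Wd s X = (SUP k. reach_within Wu Wd X k s)"

definition Post_star :: "(nat \<Rightarrow> real) \<Rightarrow> (nat \<Rightarrow> real) \<Rightarrow> nat set \<Rightarrow> nat set" where
  "Post_star Wu Wd Y = {t. \<exists>s\<in>Y. (s, t) \<in> {(a, b). rw_p Wu Wd a b > 0}\<^sup>*}"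

definition divergent :: "(nat \<Rightarrow> real) \<Rightarrow> (nat \<Rightarrow> real) \<Rightarrow> nat \<Rightarrow> nat set \<Rightarrow> bool" where
  "divergent Wu Wd s0 A \<longleftrightarrow>
     (\<exists>f0 f1. computable_real_fun f0 \<and> computable_real_fun f1 \<and>
        (\<forall>s. f0 s \<ge> 0) \<and> (\<forall>s. f1 s \<ge> 0) \<and>
        (\<forall>\<theta>. 0 < \<theta> \<and> \<theta> < 1 \<longrightarrow> PrF Wu Wd s0 {s. f0 s \<le> \<theta>} \<le> \<theta>) \<and>
        (\<forall>s. PrF Wu Wd s A \<le> f1 s) \<and>
        (\<forall>\<theta>. 0 < \<theta> \<and> \<theta> < 1 \<longrightarrow>
            finite ({s. f0 s \<ge> \<theta> \<and> f1 s \<ge> \<theta>} \<inter> Post_star Wu Wd {s0})))"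

end

theory Submission
  imports Defs
begin

text \<open>Suppose a program \<open>d\<close> decided divergence. By Kleene's recursion theorem there is a walk
  that knows its own code and, at state \<open>n\<close>, runs \<open>d\<close> for \<open>n\<close> clock steps on the question
  whether this very walk, with unit down-weights, is divergent w.r.t. \<open>0\<close> and \<open>{0}\<close>. Its
  up-weights are \<open>1\<close> until \<open>d\<close> is seen to answer ``no'' and \<open>2\<close> from then on.
  If \<open>d\<close> answers ``yes'', the walk is the symmetric one; it is recurrent, so it reaches every
  state from every state with probability \<open>1\<close>; this forces \<open>f\<^sub>0 > 1/2\<close> and
  \<open>f\<^sub>1 \<ge> 1\<close> everywhere, contradicting finiteness on the infinitely many reachable states.
  If \<open>d\<close> answers ``no'', the walk has drift \<open>2 : 1\<close> beyond some \<open>T\<close>, the probability of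
  reaching \<open>0\<close> from \<open>s\<close> is at most \<open>(T + 1) / (s + 1)\<close>, and \<open>f\<^sub>0 = 1\<close>,
  \<open>f\<^sub>1 s = (T + 1) / (s + 1)\<close> witness divergence. Either way \<open>d\<close> errs.
  Running \<open>d\<close> for a bounded time needs a clocked evaluator; compiling it into a program for
  the fixed \<open>d\<close> avoids a universal machine, and it also shows that evaluation is deterministic.\<close>

section \<open>Arithmetic programs\<close>

lemma eval_Proj_eq: "n < length xs \<Longrightarrow> y = xs ! n \<Longrightarrow> eval (Proj n) xs y"
  using eval_Proj by simp

lemma eval_Comp1: "eval g xs a \<Longrightarrow> eval f [a] z \<Longrightarrow> eval (Comp f [g]) xs z"
  by (rule eval_Comp[where ys="[a]"]) auto

lemma eval_Comp2: "eval g xs a \<Longrightarrow> eval h xs b \<Longrightarrow> eval f [a, b] z \<Longrightarrow> eval (Comp f [g, h]) xs z"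
  by (rule eval_Comp[where ys="[a, b]"]) auto

fun const_rf :: "nat \<Rightarrow> recf" where
  "const_rf 0 = Z"
| "const_rf (Suc c) = Comp Sc [const_rf c]"

lemma eval_const_rf: "eval (const_rf c) xs c"
  by (induction c) (auto intro!: eval.intros eval_Proj_eq)

declare const_rf.simps [simp del]

definition add_prog :: recf where
  "add_prog = Prim (Proj 0) (Comp Sc [Proj 0])"

lemma eval_add_prog: "eval add_prog [a, b] (a + b)"
  unfolding add_prog_def
proof (induction a)
  case (Suc a)
  show ?case by (rule eval_PrimS[OF Suc]) (auto intro!: eval.intros eval_Comp1 eval_Proj_eq)
qed (auto intro!: eval.intros eval_Proj_eq)

definition mul_prog :: recf where
  "mul_prog = Prim Z (Comp add_prog [Proj 0, Proj 2])"

lemma eval_mul_prog: "eval mul_prog [a, b] (a * b)"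
  unfolding mul_prog_def
proof (induction a)
  case (Suc a)
  have "eval (Comp add_prog [Proj 0, Proj 2]) [a * b, a, b] (b + a * b)"
    by (subst add.commute) (rule eval_Comp2, auto intro: eval_add_prog eval_Proj_eq)
  then show ?case using eval_PrimS[OF Suc] by simp
qed (auto intro!: eval.intros)

definition dec_prog :: recf where
  "dec_prog = Prim Z (Proj 1)"

lemma eval_dec_prog: "eval dec_prog [a] (a - 1)"
  unfolding dec_prog_def
proof (induction a)
  case (Suc a)
  show ?case by (rule eval_PrimS[OF Suc]) (auto intro!: eval_Proj_eq)
qed (auto intro!: eval.intros)

definition sg_prog :: recf where
  "sg_prog = Prim Z (const_rf 1)"

lemma eval_sg_prog: "eval sg_prog [a] (if a = 0 then 0 else 1)"
  unfolding sg_prog_def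
proof (induction a)
  case (Suc a)
  show ?case by (rule eval_PrimS[OF Suc]) (auto intro!: eval_const_rf)
qed (auto intro!: eval.intros)

definition iszero_prog :: recf where
  "iszero_prog = Prim (const_rf 1) Z"

lemma eval_iszero_prog: "eval iszero_prog [a] (if a = 0 then 1 else 0)"
  unfolding iszero_prog_def
proof (induction a)
  case (Suc a)
  show ?case by (rule eval_PrimS[OF Suc]) (auto intro!: eval.intros)
qed (auto intro!: eval.intros eval_const_rf)

definition triangle_prog :: recf where
  "triangle_prog = Prim Z (Comp add_prog [Proj 0, Comp Sc [Proj 1]])"

lemma eval_triangle_prog: "eval triangle_prog [a] (triangle a)"
  unfolding triangle_prog_def
proof (induction a)
  case (Suc a)
  have "eval (Comp Sc [Proj 1]) [triangle a, a] (Suc a)"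
    by (rule eval_Comp1) (auto intro: eval.intros eval_Proj_eq)
  then have "eval (Comp add_prog [Proj 0, Comp Sc [Proj 1]]) [triangle a, a] (triangle a + Suc a)"
    by (intro eval_Comp2[OF _ _ eval_add_prog]) (auto intro: eval_Proj_eq)
  then show ?case using eval_PrimS[OF Suc] by simp
qed (auto intro!: eval.intros)

definition prod_encode_prog :: recf where
  "prod_encode_prog = Comp add_prog [Comp triangle_prog [add_prog], Proj 0]"

lemma eval_prod_encode_prog: "eval prod_encode_prog [a, b] (prod_encode (a, b))"
proof -
  have "eval prod_encode_prog [a, b] (triangle (a + b) + a)"
    unfolding prod_encode_prog_def
    by (rule eval_Comp2) (auto intro: eval_add_prog eval_triangle_prog eval_Comp1 eval_Proj_eq)
  then show ?thesis by (simp add: prod_encode_def)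
qed

definition add_rf :: "recf \<Rightarrow> recf \<Rightarrow> recf" where
  "add_rf g h = Comp add_prog [g, h]"

definition mul_rf :: "recf \<Rightarrow> recf \<Rightarrow> recf" where
  "mul_rf g h = Comp mul_prog [g, h]"

definition dec_rf :: "recf \<Rightarrow> recf" where
  "dec_rf g = Comp dec_prog [g]"

definition sg_rf :: "recf \<Rightarrow> recf" where
  "sg_rf g = Comp sg_prog [g]"

definition iszero_rf :: "recf \<Rightarrow> recf" where
  "iszero_rf g = Comp iszero_prog [g]"

definition cond_rf :: "recf \<Rightarrow> recf \<Rightarrow> recf \<Rightarrow> recf" where
  "cond_rf c a b = add_rf (mul_rf (iszero_rf c) a) (mul_rf (sg_rf c) b)"

definition pair_rf :: "recf \<Rightarrow> recf \<Rightarrow> recf" where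
  "pair_rf g h = Comp prod_encode_prog [g, h]"

lemma eval_add_rf: "eval g xs a \<Longrightarrow> eval h xs b \<Longrightarrow> eval (add_rf g h) xs (a + b)"
  unfolding add_rf_def by (rule eval_Comp2) (auto intro: eval_add_prog)

lemma eval_mul_rf: "eval g xs a \<Longrightarrow> eval h xs b \<Longrightarrow> eval (mul_rf g h) xs (a * b)"
  unfolding mul_rf_def by (rule eval_Comp2) (auto intro: eval_mul_prog)

lemma eval_dec_rf: "eval g xs a \<Longrightarrow> eval (dec_rf g) xs (a - 1)"
  unfolding dec_rf_def by (rule eval_Comp1[OF _ eval_dec_prog])

lemma eval_sg_rf: "eval g xs a \<Longrightarrow> eval (sg_rf g) xs (if a = 0 then 0 else 1)"
  unfolding sg_rf_def by (rule eval_Comp1[OF _ eval_sg_prog])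

lemma eval_iszero_rf: "eval g xs a \<Longrightarrow> eval (iszero_rf g) xs (if a = 0 then 1 else 0)"
  unfolding iszero_rf_def by (rule eval_Comp1[OF _ eval_iszero_prog])

lemma eval_cond_rf:
  assumes "eval c xs x" "eval a xs u" "eval b xs v"
  shows "eval (cond_rf c a b) xs (if x = 0 then u else v)"
proof -
  have "eval (cond_rf c a b) xs ((if x = 0 then 1 else 0) * u + (if x = 0 then 0 else 1) * v)"
    unfolding cond_rf_def by (intro eval_add_rf eval_mul_rf eval_iszero_rf eval_sg_rf assms)
  then show ?thesis by (cases "x = 0") auto
qed

lemma eval_pair_rf: "eval g xs a \<Longrightarrow> eval h xs b \<Longrightarrow> eval (pair_rf g h) xs (prod_encode (a, b))"
  unfolding pair_rf_def by (rule eval_Comp2) (auto intro: eval_prod_encode_prog)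

section \<open>Clocked evaluation\<close>

text \<open>Clocked evaluation returns \<open>Suc v\<close> for the value \<open>v\<close> and \<open>0\<close> for ``no value yet''.
  Only minimization consumes the clock \<open>t\<close>: it inspects the candidates \<open>0, \<dots>, t\<close>, and
  \<open>mn_search\<close> is \<open>0\<close> while searching, \<open>Suc (Suc n)\<close> once it has found the least zero \<open>n\<close>,
  and \<open>1\<close> if it has met an undefined value first.\<close>
fun prim_iter :: "nat \<Rightarrow> (nat \<Rightarrow> nat \<Rightarrow> nat) \<Rightarrow> nat \<Rightarrow> nat" where
  "prim_iter a h 0 = a"
| "prim_iter a h (Suc j) = (let r = prim_iter a h j in if r = 0 then 0 else h (r - 1) j)"

fun mn_search :: "(nat \<Rightarrow> nat) \<Rightarrow> nat \<Rightarrow> nat" where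
  "mn_search h 0 = 0"
| "mn_search h (Suc j) = (let s = mn_search h j in
     if s = 0 then (if h j = 0 then 1 else if h j = 1 then Suc (Suc j) else 0) else s)"

fun clocked_eval :: "recf \<Rightarrow> nat \<Rightarrow> nat list \<Rightarrow> nat" where
  "clocked_eval Z t xs = Suc 0"
| "clocked_eval Sc t xs = (case xs of [] \<Rightarrow> 0 | x # _ \<Rightarrow> Suc (Suc x))"
| "clocked_eval (Proj n) t xs = (if n < length xs then Suc (xs ! n) else 0)"
| "clocked_eval (Comp f gs) t xs = (if 0 \<in> set (map (\<lambda>g. clocked_eval g t xs) gs) then 0
      else clocked_eval f t (map (\<lambda>g. clocked_eval g t xs - 1) gs))"
| "clocked_eval (Prim f g) t xs = (case xs of [] \<Rightarrow> 0
      | n # ys \<Rightarrow> prim_iter (clocked_eval f t ys) (\<lambda>y j. clocked_eval g t (y # j # ys)) n)"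
| "clocked_eval (Mn f) t xs = mn_search (\<lambda>j. clocked_eval f t (j # xs)) (Suc t) - 1"

lemma mn_search_eq_0D: "mn_search h j = 0 \<Longrightarrow> m < j \<Longrightarrow> h m \<ge> 2"
proof (induction j arbitrary: m)
  case (Suc j)
  then show ?case by (cases "mn_search h j = 0") (auto simp: Let_def less_Suc_eq split: if_splits)
qed simp

lemma mn_search_eq_Suc_SucD:
  "mn_search h j = Suc (Suc n) \<Longrightarrow> n < j \<and> h n = 1 \<and> (\<forall>m<n. h m \<ge> 2)"
proof (induction j)
  case (Suc j)
  show ?case
  proof (cases "mn_search h j = 0")
    case True
    then show ?thesis using Suc.prems mn_search_eq_0D[OF True] by (auto simp: Let_def split: if_splits)
  next
    case False
    then show ?thesis using Suc by (auto simp: Let_def)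
  qed
qed simp

lemma mn_search_eq_0I: "\<forall>m<j. h m \<ge> 2 \<Longrightarrow> mn_search h j = 0"
  by (induction j) (auto simp: Let_def)

lemma mn_search_eq_Suc_SucI:
  assumes "\<forall>m<n. h m \<ge> 2" "h n = 1" "n < j"
  shows "mn_search h j = Suc (Suc n)"
  using assms(3)
proof (induction j)
  case (Suc j)
  show ?case
  proof (cases "n < j")
    case True
    then show ?thesis using Suc by (auto simp: Let_def)
  next
    case False
    then have "n = j" using Suc.prems by auto
    then show ?thesis using mn_search_eq_0I[of j h] assms by (auto simp: Let_def)
  qed
qed simp

lemma prim_iter_sound:
  assumes f: "\<And>v. clocked_eval f t ys = Suc v \<Longrightarrow> eval f ys v"
    and g: "\<And>zs v. clocked_eval g t zs = Suc v \<Longrightarrow> eval g zs v"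
  shows "prim_iter (clocked_eval f t ys) (\<lambda>y j. clocked_eval g t (y # j # ys)) n = Suc v
    \<Longrightarrow> eval (Prim f g) (n # ys) v"
proof (induction n arbitrary: v)
  case 0
  then show ?case using f by (auto intro: eval.intros)
next
  case (Suc n)
  let ?r = "prim_iter (clocked_eval f t ys) (\<lambda>y j. clocked_eval g t (y # j # ys)) n"
  have r: "?r \<noteq> 0" "clocked_eval g t ((?r - 1) # n # ys) = Suc v"
    using Suc.prems by (auto simp: Let_def split: if_splits)
  have "eval (Prim f g) (n # ys) (?r - 1)" using r(1) by (intro Suc.IH) simp
  then show ?case using g[OF r(2)] by (rule eval_PrimS)
qed

lemma clocked_eval_sound: "clocked_eval f t xs = Suc v \<Longrightarrow> eval f xs v"
proof (induction f arbitrary: xs v)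
  case Sc
  then show ?case by (cases xs) (auto intro: eval.intros)
next
  case (Comp f gs)
  have nz: "\<forall>g\<in>set gs. clocked_eval g t xs \<noteq> 0"
    and f: "clocked_eval f t (map (\<lambda>g. clocked_eval g t xs - 1) gs) = Suc v"
    using Comp.prems by (auto split: if_splits)
  have "list_all2 (\<lambda>g y. eval g xs y) gs (map (\<lambda>g. clocked_eval g t xs - 1) gs)"
    unfolding list_all2_map2 list_all2_same
  proof
    fix g assume g: "g \<in> set gs"
    then have "clocked_eval g t xs = Suc (clocked_eval g t xs - 1)" using nz by auto
    then show "eval g xs (clocked_eval g t xs - 1)" by (rule Comp.IH(2)[OF g])
  qed
  then show ?case using Comp.IH(1)[OF f] by (rule eval_Comp)
next
  case (Prim f g)
  then obtain n ys where xs: "xs = n # ys" by (cases xs) auto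
  with Prim.prems prim_iter_sound[OF Prim.IH, where ys = ys and n = n and v = v] show ?case by simp
next
  case (Mn f)
  let ?h = "\<lambda>j. clocked_eval f t (j # xs)"
  have "mn_search ?h (Suc t) = Suc (Suc v)" using Mn.prems by simp
  from mn_search_eq_Suc_SucD[OF this] have h: "?h v = 1" "\<forall>m<v. ?h m \<ge> 2" by auto
  show ?case
  proof (rule eval_Mn)
    show "eval f (v # xs) 0" using h(1) by (intro Mn.IH) simp
    show "\<forall>m<v. \<exists>y. eval f (m # xs) y \<and> y \<noteq> 0"
    proof (intro allI impI)
      fix m assume "m < v"
      then have "?h m = Suc (?h m - 1)" "?h m - 1 \<noteq> 0" using h(2) by auto
      then show "\<exists>y. eval f (m # xs) y \<and> y \<noteq> 0" using Mn.IH by blast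
    qed
  qed
qed (auto intro: eval.intros split: if_splits)

lemma eventually_map_clocked_eval:
  assumes "list_all2 (\<lambda>g y. eventually (\<lambda>t. clocked_eval g t xs = Suc y) sequentially) gs ys"
  shows "eventually (\<lambda>t. map (\<lambda>g. clocked_eval g t xs) gs = map Suc ys) sequentially"
  using assms
proof (induction gs arbitrary: ys)
  case (Cons g gs)
  then obtain y ys' where "ys = y # ys'" "eventually (\<lambda>t. clocked_eval g t xs = Suc y) sequentially"
    "list_all2 (\<lambda>g y. eventually (\<lambda>t. clocked_eval g t xs = Suc y) sequentially) gs ys'"
    by (cases ys) auto
  with Cons.IH[of ys'] show ?case by (auto intro: eventually_conj)
qed simp

lemma clocked_eval_complete:
  "eval f xs v \<Longrightarrow> eventually (\<lambda>t. clocked_eval f t xs = Suc v) sequentially"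
proof (induction rule: eval.induct)
  case (eval_Comp xs gs ys f z)
  have "list_all2 (\<lambda>g y. eventually (\<lambda>t. clocked_eval g t xs = Suc y) sequentially) gs ys"
    using eval_Comp(1) by (rule list_all2_mono) auto
  then have "eventually (\<lambda>t. map (\<lambda>g. clocked_eval g t xs) gs = map Suc ys) sequentially"
    by (rule eventually_map_clocked_eval)
  moreover have "eventually (\<lambda>t. clocked_eval f t ys = Suc z) sequentially" by fact
  ultimately show ?case
  proof eventually_elim
    case (elim t)
    from arg_cong[OF elim(1), of "map (\<lambda>x. x - 1)"]
    have "map (\<lambda>g. clocked_eval g t xs - 1) gs = ys" by (simp add: comp_def)
    with elim show ?case by auto
  qed
next
  case (eval_PrimS f g n xs y z)
  from eval_PrimS.IH show ?case by eventually_elim (auto simp: Let_def)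
next
  case (eval_Mn f n xs)
  have "\<forall>m\<in>{..<n}. eventually (\<lambda>t. clocked_eval f t (m # xs) \<ge> 2) sequentially"
  proof
    fix m assume "m \<in> {..<n}"
    then obtain y where "y \<noteq> 0" "eventually (\<lambda>t. clocked_eval f t (m # xs) = Suc y) sequentially"
      using eval_Mn.IH by blast
    then show "eventually (\<lambda>t. clocked_eval f t (m # xs) \<ge> 2) sequentially"
      by (auto elim: eventually_mono)
  qed
  then have "eventually (\<lambda>t. \<forall>m\<in>{..<n}. clocked_eval f t (m # xs) \<ge> 2) sequentially"
    by (rule eventually_ball_finite[OF finite_lessThan])
  moreover have "eventually (\<lambda>t. clocked_eval f t (n # xs) = 1) sequentially"
    using eval_Mn.IH by simp
  moreover have "eventually (\<lambda>t. n \<le> t) sequentially"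
    by (rule eventually_ge_at_top)
  ultimately show ?case
    by eventually_elim (simp only: clocked_eval.simps, subst mn_search_eq_Suc_SucI[where n = n], auto)
qed simp_all

lemma eval_deterministic: "eval f xs v \<Longrightarrow> eval f xs w \<Longrightarrow> v = w"
proof -
  assume "eval f xs v" "eval f xs w"
  from eventually_conj[OF this[THEN clocked_eval_complete]]
  obtain t where "clocked_eval f t xs = Suc v" "clocked_eval f t xs = Suc w"
    by (auto dest: eventually_happens)
  then show "v = w" by simp
qed

lemma clocked_eval_consistent: "eval f xs v \<Longrightarrow> clocked_eval f t xs = Suc w \<Longrightarrow> w = v"
  using clocked_eval_sound eval_deterministic by blast

section \<open>Compiling clocked evaluation\<close>

definition projs :: "nat \<Rightarrow> nat \<Rightarrow> recf list" where
  "projs off n = map (\<lambda>i. Proj (i + off)) [0..<n]"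

lemma eval_projs:
  "length pre = off \<Longrightarrow> length ys = n \<Longrightarrow> list_all2 (\<lambda>g y. eval g (pre @ ys) y) (projs off n) ys"
  unfolding projs_def list_all2_conv_all_nth by (auto simp: nth_append intro!: eval_Proj_eq)

fun all_nonzero_rf :: "recf list \<Rightarrow> recf" where
  "all_nonzero_rf [] = const_rf 1"
| "all_nonzero_rf (g # gs) = mul_rf (sg_rf g) (all_nonzero_rf gs)"

lemma eval_all_nonzero_rf:
  "list_all2 (\<lambda>g y. eval g xs y) gs ys \<Longrightarrow> eval (all_nonzero_rf gs) xs (if 0 \<in> set ys then 0 else 1)"
proof (induction gs arbitrary: ys)
  case Nil
  then show ?case by (auto intro: eval_const_rf)
next
  case (Cons g gs)
  then obtain y ys' where ys: "ys = y # ys'" "eval g xs y" "list_all2 (\<lambda>g y. eval g xs y) gs ys'"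
    by (cases ys) auto
  have "eval (all_nonzero_rf (g # gs)) xs
      ((if y = 0 then 0 else 1) * (if 0 \<in> set ys' then 0 else 1))"
    using eval_mul_rf[OF eval_sg_rf[OF ys(2)] Cons.IH[OF ys(3)]] by simp
  then show ?case using ys(1) by auto
qed

text \<open>The clock comes first: argument lists are \<open>t # xs\<close>, and the loops for \<open>Prim\<close> and
  \<open>Mn\<close> run on argument lists \<open>state # counter # t # xs\<close>.\<close>
fun clocked_rf :: "recf \<Rightarrow> nat \<Rightarrow> recf" where
  "clocked_rf Z k = const_rf 1"
| "clocked_rf Sc k = (if k = 0 then Z else Comp Sc [Comp Sc [Proj 1]])"
| "clocked_rf (Proj n) k = (if n < k then Comp Sc [Proj (Suc n)] else Z)"
| "clocked_rf (Comp f gs) k = mul_rf (all_nonzero_rf (map (\<lambda>g. clocked_rf g k) gs))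
      (Comp (clocked_rf f (length gs)) (Proj 0 # map (\<lambda>g. dec_rf (clocked_rf g k)) gs))"
| "clocked_rf (Prim f g) k = (if k = 0 then Z else
      Comp (Prim (clocked_rf f (k - 1)) (mul_rf (sg_rf (Proj 0))
         (Comp (clocked_rf g (Suc k)) (Proj 2 # dec_rf (Proj 0) # Proj 1 # projs 3 (k - 1)))))
       (Proj 1 # Proj 0 # projs 2 (k - 1)))"
| "clocked_rf (Mn f) k = dec_rf (Comp (Prim Z
      (cond_rf (Proj 0)
        (cond_rf (Comp (clocked_rf f (Suc k)) (Proj 2 # Proj 1 # projs 3 k)) (const_rf 1)
          (cond_rf (dec_rf (Comp (clocked_rf f (Suc k)) (Proj 2 # Proj 1 # projs 3 k)))
             (Comp Sc [Comp Sc [Proj 1]]) Z))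
        (Proj 0)))
     (Comp Sc [Proj 0] # Proj 0 # projs 1 k))"

lemma eval_clocked_rf_Comp:
  assumes f: "eval (clocked_rf f (length gs)) (t # map (\<lambda>g. clocked_eval g t xs - 1) gs)
      (clocked_eval f t (map (\<lambda>g. clocked_eval g t xs - 1) gs))"
    and gs: "\<And>g. g \<in> set gs \<Longrightarrow> eval (clocked_rf g k) (t # xs) (clocked_eval g t xs)"
  shows "eval (clocked_rf (Comp f gs) k) (t # xs) (clocked_eval (Comp f gs) t xs)"
proof -
  let ?vs = "map (\<lambda>g. clocked_eval g t xs) gs"
  have "list_all2 (\<lambda>g y. eval g (t # xs) y) (map (\<lambda>g. clocked_rf g k) gs) ?vs"
    using gs by (simp add: list_all2_map1 list_all2_map2 list_all2_same)
  note nonzero = eval_all_nonzero_rf[OF this]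
  have "eval (dec_rf (clocked_rf g k)) (t # xs) (clocked_eval g t xs - 1)" if "g \<in> set gs" for g
    using eval_dec_rf[OF gs[OF that]] .
  then have "list_all2 (\<lambda>g y. eval g (t # xs) y) (Proj 0 # map (\<lambda>g. dec_rf (clocked_rf g k)) gs)
      (t # map (\<lambda>g. clocked_eval g t xs - 1) gs)"
    by (auto simp: list_all2_map1 list_all2_map2 list_all2_same intro: eval_Proj_eq)
  from eval_mul_rf[OF nonzero eval_Comp[OF this f]] show ?thesis
    by (cases "0 \<in> set ?vs") (simp_all only: clocked_eval.simps clocked_rf.simps if_True if_False
        mult_1 mult_0)
qed

lemma eval_clocked_rf_Prim:
  assumes ys: "length ys = k - 1" and k: "k > 0"
    and f: "eval (clocked_rf f (k - 1)) (t # ys) (clocked_eval f t ys)"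
    and g: "\<And>y j. eval (clocked_rf g (Suc k)) (t # y # j # ys) (clocked_eval g t (y # j # ys))"
  shows "eval (clocked_rf (Prim f g) k) (t # n # ys) (clocked_eval (Prim f g) t (n # ys))"
proof -
  define body where "body = mul_rf (sg_rf (Proj 0))
    (Comp (clocked_rf g (Suc k)) (Proj 2 # dec_rf (Proj 0) # Proj 1 # projs 3 (k - 1)))"
  let ?iter = "prim_iter (clocked_eval f t ys) (\<lambda>y j. clocked_eval g t (y # j # ys))"
  have loop: "eval (Prim (clocked_rf f (k - 1)) body) (j # t # ys) (?iter j)" for j
  proof (induction j)
    case 0
    then show ?case using f by (auto intro: eval.intros)
  next
    case (Suc j)
    let ?y = "?iter j"
    have "eval (dec_rf (Proj 0)) (?y # j # t # ys) (?y - 1)"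
      by (rule eval_dec_rf) (auto intro: eval_Proj_eq)
    then have "list_all2 (\<lambda>h v. eval h (?y # j # t # ys) v)
        (Proj 2 # dec_rf (Proj 0) # Proj 1 # projs 3 (k - 1)) (t # (?y - 1) # j # ys)"
      using eval_projs[of "[?y, j, t]" 3 ys "k - 1"] ys by (auto intro!: eval_Proj_eq)
    from eval_Comp[OF this g]
    have "eval body (?y # j # t # ys) (?iter (Suc j))"
      unfolding body_def
      using eval_mul_rf[OF eval_sg_rf[OF eval_Proj_eq[of 0 "?y # j # t # ys" ?y]]]
      by (cases "?y = 0") (auto simp: Let_def)
    then show ?case by (rule eval_PrimS[OF Suc])
  qed
  have "list_all2 (\<lambda>h v. eval h (t # n # ys) v) (Proj 1 # Proj 0 # projs 2 (k - 1)) (n # t # ys)"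
    using eval_projs[of "[t, n]" 2 ys "k - 1"] ys by (auto intro!: eval_Proj_eq)
  from eval_Comp[OF this loop] show ?thesis
    using k by (simp add: body_def)
qed

lemma eval_clocked_rf_Mn:
  assumes xs: "length xs = k"
    and f: "\<And>j. eval (clocked_rf f (Suc k)) (t # j # xs) (clocked_eval f t (j # xs))"
  shows "eval (clocked_rf (Mn f) k) (t # xs) (clocked_eval (Mn f) t xs)"
proof -
  define W where "W = Comp (clocked_rf f (Suc k)) (Proj 2 # Proj 1 # projs 3 k)"
  define body where "body = cond_rf (Proj 0)
    (cond_rf W (const_rf 1) (cond_rf (dec_rf W) (Comp Sc [Comp Sc [Proj 1]]) Z)) (Proj 0)"
  let ?h = "\<lambda>j. clocked_eval f t (j # xs)"
  have loop: "eval (Prim Z body) (j # t # xs) (mn_search ?h j)" for j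
  proof (induction j)
    case 0
    then show ?case by (auto intro: eval.intros)
  next
    case (Suc j)
    let ?s = "mn_search ?h j"
    have "list_all2 (\<lambda>h v. eval h (?s # j # t # xs) v) (Proj 2 # Proj 1 # projs 3 k) (t # j # xs)"
      using eval_projs[of "[?s, j, t]" 3 xs k] xs by (auto intro!: eval_Proj_eq)
    from eval_Comp[OF this f] have w: "eval W (?s # j # t # xs) (?h j)"
      unfolding W_def .
    have ss: "eval (Comp Sc [Comp Sc [Proj 1]]) (?s # j # t # xs) (Suc (Suc j))"
      by (auto intro!: eval_Comp1 eval.intros eval_Proj_eq)
    have "eval body (?s # j # t # xs)
        (if ?s = 0 then if ?h j = 0 then 1 else if ?h j - 1 = 0 then Suc (Suc j) else 0 else ?s)"
      unfolding body_def
      by (intro eval_cond_rf w eval_const_rf eval_dec_rf ss eval_Z) (auto intro: eval_Proj_eq)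
    moreover have "(if ?s = 0 then if ?h j = 0 then 1 else if ?h j - 1 = 0 then Suc (Suc j) else 0
        else ?s) = mn_search ?h (Suc j)"
      by (simp add: Let_def)
    ultimately have "eval body (?s # j # t # xs) (mn_search ?h (Suc j))"
      by simp
    then show ?case by (rule eval_PrimS[OF Suc])
  qed
  have "list_all2 (\<lambda>h v. eval h (t # xs) v) (Comp Sc [Proj 0] # Proj 0 # projs 1 k) (Suc t # t # xs)"
    using eval_projs[of "[t]" 1 xs k] xs by (auto intro!: eval_Proj_eq eval_Comp1 eval.intros)
  from eval_dec_rf[OF eval_Comp[OF this loop]] show ?thesis
    by (simp add: body_def W_def)
qed

lemma eval_clocked_rf: "length xs = k \<Longrightarrow> eval (clocked_rf f k) (t # xs) (clocked_eval f t xs)"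
proof (induction f arbitrary: k xs)
  case Sc
  then show ?case by (cases xs) (auto intro!: eval.intros eval_Comp1 eval_Proj_eq)
next
  case (Comp f gs)
  show ?case
    by (rule eval_clocked_rf_Comp[OF Comp.IH(1)]) (use Comp.IH(2) Comp.prems in auto)
next
  case (Prim f g)
  show ?case
  proof (cases xs)
    case (Cons n ys)
    show ?thesis
      unfolding Cons by (rule eval_clocked_rf_Prim) (use Prim.prems Cons in \<open>auto intro!: Prim.IH\<close>)
  qed (use Prim.prems in \<open>auto intro: eval.intros\<close>)
next
  case (Mn f)
  show ?case by (rule eval_clocked_rf_Mn) (use Mn.prems in \<open>auto intro!: Mn.IH\<close>)
qed (auto intro!: eval.intros eval_Comp1 eval_Proj_eq eval_const_rf)

section \<open>The recursion theorem\<close>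

definition self_apply :: "recf \<Rightarrow> recf" where
  "self_apply M = Comp M [const_rf (recf_encode M), Proj 0]"

lemma eval_self_apply: "eval M [recf_encode M, n] v \<Longrightarrow> eval (self_apply M) [n] v"
  unfolding self_apply_def by (rule eval_Comp2[OF eval_const_rf]) (auto intro: eval_Proj_eq)

text \<open>The code of \<open>Comp f gs\<close> is \<open>prod_encode (3, prod_encode (recf_encode f, c))\<close> with
  \<open>c = list_encode (map recf_encode gs)\<close>, and \<open>list_encode (a # as) = Suc (prod_encode (a,
  list_encode as))\<close>; the two programs below assemble such codes.\<close>
definition const_code_prog :: recf where
  "const_code_prog = Prim Z (pair_rf (const_rf 3)
     (pair_rf (const_rf (recf_encode Sc)) (Comp Sc [pair_rf (Proj 0) (const_rf 0)])))"

lemma eval_const_code_prog: "eval const_code_prog [x] (recf_encode (const_rf x))"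
  unfolding const_code_prog_def
proof (induction x)
  case 0
  have "recf_encode Z = 0" by (simp add: prod_encode_def)
  then show ?case by (auto simp: const_rf.simps intro: eval.intros)
next
  case (Suc x)
  let ?args = "[recf_encode (const_rf x), x]"
  have "eval (Comp Sc [pair_rf (Proj 0) (const_rf 0)]) ?args
      (Suc (prod_encode (recf_encode (const_rf x), 0)))"
    by (intro eval_Comp1[OF _ eval_Sc] eval_pair_rf eval_const_rf eval_Proj_eq) auto
  then have "eval (pair_rf (const_rf 3)
      (pair_rf (const_rf (recf_encode Sc)) (Comp Sc [pair_rf (Proj 0) (const_rf 0)]))) ?args
      (prod_encode (3, prod_encode (recf_encode Sc, Suc (prod_encode (recf_encode (const_rf x), 0)))))"
    by (intro eval_pair_rf eval_const_rf)
  then show ?case using eval_PrimS[OF Suc] by (simp add: const_rf.simps)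
qed

definition self_apply_code_prog :: recf where
  "self_apply_code_prog = pair_rf (const_rf 3) (pair_rf (Proj 0)
     (Comp Sc [pair_rf (Comp const_code_prog [Proj 0])
        (Comp Sc [pair_rf (const_rf (recf_encode (Proj 0))) (const_rf 0)])]))"

lemma eval_self_apply_code_prog:
  "eval self_apply_code_prog [recf_encode M, n] (recf_encode (self_apply M))"
proof -
  let ?m = "recf_encode M"
  have "eval (Comp const_code_prog [Proj 0]) [?m, n] (recf_encode (const_rf ?m))"
    by (rule eval_Comp1[OF _ eval_const_code_prog]) (auto intro: eval_Proj_eq)
  then have "eval self_apply_code_prog [?m, n] (prod_encode (3, prod_encode (?m,
      Suc (prod_encode (recf_encode (const_rf ?m), Suc (prod_encode (recf_encode (Proj 0), 0)))))))"
    unfolding self_apply_code_prog_def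
    by (intro eval_pair_rf eval_const_rf eval_Comp1[OF _ eval_Sc]) (auto intro: eval_Proj_eq)
  then show ?thesis
    by (simp add: self_apply_def del: recf_encode.simps(3))
qed

text \<open>Kleene's second recursion theorem: a program may use its own code.\<close>
definition fixpoint_prog :: "recf \<Rightarrow> recf" where
  "fixpoint_prog P = self_apply (Comp P [self_apply_code_prog, Proj 1])"

lemma eval_fixpoint_prog:
  "eval P [recf_encode (fixpoint_prog P), n] v \<Longrightarrow> eval (fixpoint_prog P) [n] v"
  unfolding fixpoint_prog_def
  by (intro eval_self_apply eval_Comp2[OF eval_self_apply_code_prog]) (auto intro: eval_Proj_eq)

lemma rat_of_code_prod_encode: "rat_of_code (prod_encode (a, b)) = real a / real b"
  by (simp add: rat_of_code_def prod_encode_inverse)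

lemma approx_of_code_prod_encode: "approx_of_code (prod_encode (a, b)) = real a / real (Suc b)"
  by (simp add: approx_of_code_def prod_encode_inverse)

lemma pos_rat_code_prod_encode: "a > 0 \<Longrightarrow> b > 0 \<Longrightarrow> pos_rat_code (prod_encode (a, b))"
  by (simp add: pos_rat_code_def prod_encode_inverse)

lemma weight_progI:
  "(\<And>n. eval p [n] (w n)) \<Longrightarrow> (\<And>n. pos_rat_code (w n)) \<Longrightarrow> weight_prog p"
  unfolding weight_prog_def using eval_deterministic by metis

lemma prog_weight_eq: "(\<And>n. eval p [n] (w n)) \<Longrightarrow> prog_weight p n = rat_of_code (w n)"
  unfolding prog_weight_def using eval_deterministic by blast

lemma computable_real_fun_ratio:
  assumes q: "\<And>s k. eval q [s, k] (prod_encode (a s, b s))"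
  shows "computable_real_fun (\<lambda>s. real (a s) / real (Suc (b s)))"
proof -
  have "\<bar>real (a s) / real (Suc (b s)) - approx_of_code v\<bar> \<le> 1 / 2 ^ k"
    if "eval q [s, k] v" for s k v
    using eval_deterministic[OF q that, symmetric] by (simp add: approx_of_code_prod_encode)
  with q show ?thesis
    unfolding computable_real_fun_def by blast
qed

section \<open>Hitting probabilities\<close>

lemma reach_within_empty: "reach_within Wu Wd {} k s = 0"
  by (induction k arbitrary: s) auto

lemma PrF_empty: "PrF Wu Wd s {} = 0"
  unfolding PrF_def reach_within_empty by simp

lemma PrF_mem: "s \<in> X \<Longrightarrow> PrF Wu Wd s X = 1"
proof -
  assume "s \<in> X"
  then have "reach_within Wu Wd X k s = 1" for k by (cases k) auto
  then show ?thesis unfolding PrF_def by simp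
qed

lemma rw_p_up: "0 < s \<Longrightarrow> rw_p Wu Wd s (Suc s) = Wu s / (Wu s + Wd s)"
  by (simp add: rw_p_def)

lemma rw_p_down: "0 < s \<Longrightarrow> rw_p Wu Wd s (s - 1) = Wd s / (Wu s + Wd s)"
proof -
  assume "0 < s"
  moreover have "s - 1 \<noteq> Suc s" by arith
  ultimately show ?thesis by (simp add: rw_p_def)
qed

lemma reach_within_Suc:
  "s \<notin> X \<Longrightarrow> 0 < s \<Longrightarrow> reach_within Wu Wd X (Suc k) s =
     rw_p Wu Wd s (Suc s) * reach_within Wu Wd X k (Suc s)
   + rw_p Wu Wd s (s - 1) * reach_within Wu Wd X k (s - 1)"
  by simp

locale random_walk =
  fixes Wu Wd :: "nat \<Rightarrow> real"
  assumes Wu_pos: "Wu n > 0" and Wd_pos: "Wd n > 0"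
begin

lemma rw_p_nonneg: "rw_p Wu Wd s t \<ge> 0"
  using Wu_pos[of s] Wd_pos[of s] by (simp add: rw_p_def)

lemma rw_p_up_down_sum: "0 < s \<Longrightarrow> rw_p Wu Wd s (Suc s) + rw_p Wu Wd s (s - 1) = 1"
  unfolding rw_p_up rw_p_down using Wu_pos[of s] Wd_pos[of s]
  by (simp add: add_divide_distrib[symmetric])

lemma reach_within_bounds: "0 \<le> reach_within Wu Wd X k s \<and> reach_within Wu Wd X k s \<le> 1"
proof (induction k arbitrary: s)
  case (Suc k)
  show ?case
  proof (cases "s \<in> X \<or> s = 0")
    case False
    let ?p = "rw_p Wu Wd s (Suc s)" and ?q = "rw_p Wu Wd s (s - 1)"
    let ?a = "reach_within Wu Wd X k (Suc s)" and ?b = "reach_within Wu Wd X k (s - 1)"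
    have "?p * ?a + ?q * ?b \<le> ?p * 1 + ?q * 1"
      using Suc rw_p_nonneg by (intro add_mono mult_left_mono) auto
    moreover have "0 \<le> ?p * ?a + ?q * ?b"
      using Suc rw_p_nonneg by (intro add_nonneg_nonneg mult_nonneg_nonneg) auto
    moreover have "reach_within Wu Wd X (Suc k) s = ?p * ?a + ?q * ?b"
      using False by (intro reach_within_Suc) auto
    ultimately show ?thesis
      using False rw_p_up_down_sum[of s] by simp
  qed (use Suc in auto)
qed simp

lemma reach_within_Suc_mono: "reach_within Wu Wd X k s \<le> reach_within Wu Wd X (Suc k) s"
proof (induction k arbitrary: s)
  case 0
  then show ?case using reach_within_bounds[of X 1 s] by auto
next
  case (Suc k)
  show ?case
  proof (cases "s \<in> X \<or> s = 0")
    case False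
    then show ?thesis
      by (simp add: reach_within_Suc del: reach_within.simps)
        (intro add_mono mult_left_mono Suc.IH rw_p_nonneg)
  qed (use Suc in auto)
qed

lemma reach_within_mono_set:
  "Y \<subseteq> X \<Longrightarrow> reach_within Wu Wd Y k s \<le> reach_within Wu Wd X k s"
proof (induction k arbitrary: s)
  case (Suc k)
  consider "s \<in> X" | "s \<notin> X" "s = 0" | "s \<notin> X" "s > 0" by blast
  then show ?case
  proof cases
    case 1
    then show ?thesis using reach_within_bounds[of Y "Suc k" s] by simp
  next
    case 3
    with Suc.prems have "s \<notin> Y" by auto
    with 3 show ?thesis
      by (simp add: reach_within_Suc del: reach_within.simps)
        (intro add_mono mult_left_mono Suc rw_p_nonneg)
  qed (use Suc in auto)
qed auto

lemma LIMSEQ_reach_within: "(\<lambda>k. reach_within Wu Wd X k s) \<longlonglongrightarrow> PrF Wu Wd s X"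
  unfolding PrF_def
proof (rule LIMSEQ_incseq_SUP)
  show "bdd_above (range (\<lambda>k. reach_within Wu Wd X k s))"
    using reach_within_bounds by (intro bdd_aboveI[where M = 1]) blast
  show "incseq (\<lambda>k. reach_within Wu Wd X k s)"
    unfolding incseq_Suc_iff using reach_within_Suc_mono by blast
qed

lemma PrF_bounds: "0 \<le> PrF Wu Wd s X \<and> PrF Wu Wd s X \<le> 1"
  using LIMSEQ_reach_within reach_within_bounds by (meson LIMSEQ_le_const LIMSEQ_le_const2)

lemma PrF_mono_set: "Y \<subseteq> X \<Longrightarrow> PrF Wu Wd s Y \<le> PrF Wu Wd s X"
  by (rule LIMSEQ_le[OF LIMSEQ_reach_within LIMSEQ_reach_within]) (auto intro: reach_within_mono_set)

lemma PrF_step: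
  assumes "s \<notin> X" "s > 0"
  shows "PrF Wu Wd s X = rw_p Wu Wd s (Suc s) * PrF Wu Wd (Suc s) X
      + rw_p Wu Wd s (s - 1) * PrF Wu Wd (s - 1) X"
proof (rule LIMSEQ_unique)
  show "(\<lambda>k. reach_within Wu Wd X (Suc k) s) \<longlonglongrightarrow> PrF Wu Wd s X"
    using LIMSEQ_reach_within by (rule LIMSEQ_Suc)
  show "(\<lambda>k. reach_within Wu Wd X (Suc k) s) \<longlonglongrightarrow>
      rw_p Wu Wd s (Suc s) * PrF Wu Wd (Suc s) X + rw_p Wu Wd s (s - 1) * PrF Wu Wd (s - 1) X"
    unfolding reach_within_Suc[OF assms] by (intro tendsto_intros LIMSEQ_reach_within)
qed

lemma PrF_state_0:
  assumes "0 \<notin> X"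
  shows "PrF Wu Wd 0 X = PrF Wu Wd 1 X"
proof (rule LIMSEQ_unique)
  show "(\<lambda>k. reach_within Wu Wd X (Suc k) 0) \<longlonglongrightarrow> PrF Wu Wd 0 X"
    using LIMSEQ_reach_within by (rule LIMSEQ_Suc)
  show "(\<lambda>k. reach_within Wu Wd X (Suc k) 0) \<longlonglongrightarrow> PrF Wu Wd 1 X"
    using assms LIMSEQ_reach_within by simp
qed

lemma atLeast_subset_Post_star: "{s0..} \<subseteq> Post_star Wu Wd {s0}"
proof -
  have "(s0, s0 + j) \<in> {(a, b). rw_p Wu Wd a b > 0}\<^sup>*" for j
  proof (induction j)
    case (Suc j)
    have "rw_p Wu Wd (s0 + j) (Suc (s0 + j)) > 0"
      using Wu_pos Wd_pos by (auto simp: rw_p_def intro!: divide_pos_pos add_pos_pos)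
    with Suc show ?case by (auto intro: rtrancl_into_rtrancl)
  qed simp
  then show ?thesis unfolding Post_star_def by (auto simp: atLeast_iff dest!: le_Suc_ex)
qed

end

section \<open>Balanced and drifting walks\<close>

lemma zero_second_difference_affine:
  fixes r :: "nat \<Rightarrow> real"
  assumes "\<And>n. Suc n < N \<Longrightarrow> r (Suc (Suc n)) - r (Suc n) = r (Suc n) - r n"
  shows "n \<le> N \<Longrightarrow> r n = r 0 + real n * (r 1 - r 0)"
proof -
  have diff: "r (Suc n) - r n = r 1 - r 0" if "Suc n \<le> N" for n
    using that
  proof (induction n)
    case (Suc n)
    then show ?case using assms[of n] by simp
  qed simp
  show "n \<le> N \<Longrightarrow> r n = r 0 + real n * (r 1 - r 0)"
  proof (induction n)
    case (Suc n)
    then show ?case using diff[of n] by (simp add: algebra_simps)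
  qed simp
qed

lemma bounded_zero_second_difference_const:
  fixes r :: "nat \<Rightarrow> real"
  assumes "\<And>n. r (Suc (Suc n)) - r (Suc n) = r (Suc n) - r n" and bounded: "\<And>n. \<bar>r n\<bar> \<le> B"
  shows "r n = r 0"
proof -
  have affine: "r n = r 0 + real n * (r 1 - r 0)" for n
    using assms(1) by (rule zero_second_difference_affine[of n r n]) simp
  have "r 1 - r 0 = 0"
  proof (rule ccontr)
    assume "r 1 - r 0 \<noteq> 0"
    then obtain n where "2 * B < real n * \<bar>r 1 - r 0\<bar>"
      using ex_less_of_nat_mult[of "\<bar>r 1 - r 0\<bar>" "2 * B"] by auto
    moreover have "\<bar>r n - r 0\<bar> \<le> 2 * B"
      using bounded[of n] bounded[of 0] by linarith
    ultimately show False
      using affine[of n] by (simp add: abs_mult)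
  qed
  with affine[of n] show ?thesis by simp
qed

context random_walk
begin

lemma PrF_balanced:
  assumes balanced: "\<And>n. Wu n = Wd n" and "t \<in> X"
  shows "PrF Wu Wd s X = 1"
proof -
  define r where "r s = PrF Wu Wd s {t}" for s
  have harmonic: "r (Suc (Suc n)) - r (Suc n) = r (Suc n) - r n" if "Suc n \<noteq> t" for n
  proof -
    have "rw_p Wu Wd (Suc n) (Suc (Suc n)) = 1/2" "rw_p Wu Wd (Suc n) (Suc n - 1) = 1/2"
      using rw_p_up[of "Suc n"] rw_p_down[of "Suc n"] balanced[of "Suc n"] Wd_pos[of "Suc n"] by auto
    with PrF_step[of "Suc n" "{t}"] that show ?thesis
      unfolding r_def by simp
  qed
  have bounds: "0 \<le> r n \<and> r n \<le> 1" for n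
    unfolding r_def by (rule PrF_bounds)
  have r_t: "r t = 1"
    unfolding r_def by (simp add: PrF_mem)
  have above: "r (t + n) = 1" for n
  proof -
    have "r (t + n) = r (t + 0)"
      by (rule bounded_zero_second_difference_const[where B = 1]) (use harmonic bounds in auto)
    with r_t show ?thesis by simp
  qed
  have below: "r n = 1" if "n \<le> t" for n
  proof (cases "t = 0")
    case False
    then have "r 1 = r 0" unfolding r_def by (intro PrF_state_0[symmetric]) auto
    have affine: "r n = r 0 + real n * (r 1 - r 0)" if "n \<le> t" for n
      by (rule zero_second_difference_affine[of t r n]) (use harmonic that in auto)
    show ?thesis
      using affine[OF that] affine[OF order_refl] \<open>r 1 = r 0\<close> r_t by simp
  qed (use that r_t in simp)
  have "r s = 1"
    using above[of "s - t"] below[of s] by (cases "s \<le> t") simp_all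
  then show ?thesis
    using PrF_mono_set[of "{t}" X s] PrF_bounds[of s X] \<open>t \<in> X\<close> unfolding r_def by simp
qed

lemma balanced_not_divergent:
  assumes balanced: "\<And>n. Wu n = Wd n" and "A \<noteq> {}"
  shows "\<not> divergent Wu Wd s0 A"
proof
  assume "divergent Wu Wd s0 A"
  then obtain f0 f1 where
    f0: "\<forall>\<theta>. 0 < \<theta> \<and> \<theta> < 1 \<longrightarrow> PrF Wu Wd s0 {s. f0 s \<le> \<theta>} \<le> \<theta>" and
    f1: "\<forall>s. PrF Wu Wd s A \<le> f1 s" and
    fin: "\<forall>\<theta>. 0 < \<theta> \<and> \<theta> < 1 \<longrightarrow>
      finite ({s. f0 s \<ge> \<theta> \<and> f1 s \<ge> \<theta>} \<inter> Post_star Wu Wd {s0})"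
    unfolding divergent_def by blast
  have f0_gt: "f0 s > 1/2" for s
  proof (rule ccontr)
    assume "\<not> f0 s > 1/2"
    then have "PrF Wu Wd s0 {s. f0 s \<le> 1/2} = 1"
      by (intro PrF_balanced[OF balanced, of s]) simp
    with f0[rule_format, of "1/2"] show False by simp
  qed
  have f1_ge: "f1 s \<ge> 1" for s
    using f1 PrF_balanced[OF balanced] \<open>A \<noteq> {}\<close> by (metis all_not_in_conv)
  have "{s0..} \<subseteq> {s. f0 s \<ge> 1/2 \<and> f1 s \<ge> 1/2} \<inter> Post_star Wu Wd {s0}"
  proof
    fix s assume "s \<in> {s0..}"
    moreover have "f0 s \<ge> 1/2" "f1 s \<ge> 1/2"
      using f0_gt[of s] f1_ge[of s] by linarith+
    ultimately show "s \<in> {s. f0 s \<ge> 1/2 \<and> f1 s \<ge> 1/2} \<inter> Post_star Wu Wd {s0}"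
      using atLeast_subset_Post_star by blast
  qed
  moreover have "finite ({s. f0 s \<ge> 1/2 \<and> f1 s \<ge> 1/2} \<inter> Post_star Wu Wd {s0})"
    using fin[rule_format, of "1/2"] by simp
  ultimately show False
    using infinite_Ici finite_subset by blast
qed

end

definition escape_bound :: "nat \<Rightarrow> nat \<Rightarrow> real" where
  "escape_bound T s = (if s \<le> T then 1 else (1/2) ^ (s - T))"

lemma escape_bound_le_1: "escape_bound T s \<le> 1"
  unfolding escape_bound_def by (simp add: power_le_one)

lemma escape_bound_le: "escape_bound T s \<le> real (T + 1) / real (Suc s)"
proof (cases "s \<le> T")
  case False
  define j where "j = s - T"
  have "real (Suc j) \<le> real (2 ^ j)"
    using less_exp[of j] by (simp only: of_nat_le_iff Suc_le_eq)
  then have "1 + real j \<le> 2 ^ j"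
    by simp
  have "real (Suc s) = real (T + 1) + real j"
    using False by (simp add: j_def)
  also have "\<dots> \<le> real (T + 1) * (1 + real j)"
    by (simp add: algebra_simps)
  also have "\<dots> \<le> real (T + 1) * 2 ^ j"
    using \<open>1 + real j \<le> 2 ^ j\<close> by (rule mult_left_mono) simp
  finally have "1 / 2 ^ j \<le> real (T + 1) / real (Suc s)"
    by (simp add: divide_simps mult.commute)
  then show ?thesis
    using False by (simp add: escape_bound_def j_def power_one_over)
qed (simp add: escape_bound_def)

lemma escape_bound_superharmonic:
  fixes p :: real
  assumes "0 \<le> p" "p \<le> 1" "0 < s" and drift: "T < s \<Longrightarrow> 2/3 \<le> p"
  shows "p * escape_bound T (Suc s) + (1 - p) * escape_bound T (s - 1) \<le> escape_bound T s"
proof (cases "s \<le> T")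
  case True
  have "p * escape_bound T (Suc s) + (1 - p) * escape_bound T (s - 1) \<le> p * 1 + (1 - p) * 1"
    using assms by (intro add_mono mult_left_mono escape_bound_le_1) simp_all
  with True show ?thesis by (simp add: escape_bound_def)
next
  case False
  define j where "j = s - Suc T"
  have s: "s = T + Suc j" using False by (simp add: j_def)
  have "(p / 4 + (1 - p)) * (1/2) ^ j \<le> 1/2 * (1/2) ^ j"
    using drift False by (intro mult_right_mono) simp_all
  then have "p * (1/2) ^ Suc (Suc j) + (1 - p) * (1/2) ^ j \<le> (1/2) ^ Suc j"
    by (simp add: algebra_simps)
  moreover have "escape_bound T (Suc s) = (1/2) ^ Suc (Suc j)"
    "escape_bound T (s - 1) = (1/2) ^ j" "escape_bound T s = (1/2) ^ Suc j"
    using s by (auto simp: escape_bound_def)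
  ultimately show ?thesis by (simp only:)
qed

context random_walk
begin

lemma reach_within_singleton_0_le:
  assumes drift: "\<And>n. T < n \<Longrightarrow> 2 * Wd n \<le> Wu n"
  shows "reach_within Wu Wd {0} k s \<le> escape_bound T s"
proof (induction k arbitrary: s)
  case 0
  then show ?case by (simp add: escape_bound_def)
next
  case (Suc k)
  show ?case
  proof (cases "s = 0")
    case False
    let ?p = "rw_p Wu Wd s (Suc s)"
    have q: "rw_p Wu Wd s (s - 1) = 1 - ?p"
      using rw_p_up_down_sum[of s] False by simp
    have "reach_within Wu Wd {0} (Suc k) s
        \<le> ?p * escape_bound T (Suc s) + rw_p Wu Wd s (s - 1) * escape_bound T (s - 1)"
      using False by (simp add: reach_within_Suc del: reach_within.simps)
        (intro add_mono mult_left_mono Suc.IH rw_p_nonneg)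
    also have "\<dots> \<le> escape_bound T s"
      unfolding q
    proof (rule escape_bound_superharmonic)
      show "0 \<le> ?p"
        by (rule rw_p_nonneg)
      show "?p \<le> 1"
        using rw_p_nonneg[of s "s - 1"] q by linarith
      show "2/3 \<le> ?p" if "T < s"
        using drift[OF that] False Wu_pos[of s] Wd_pos[of s] by (simp add: rw_p_up field_simps)
    qed (use False in simp)
    finally show ?thesis .
  qed (simp add: escape_bound_def)
qed

lemma PrF_singleton_0_le:
  assumes "\<And>n. T < n \<Longrightarrow> 2 * Wd n \<le> Wu n"
  shows "PrF Wu Wd s {0} \<le> real (T + 1) / real (Suc s)"
proof -
  have "PrF Wu Wd s {0} \<le> escape_bound T s"
    using LIMSEQ_reach_within
    by (rule LIMSEQ_le_const2) (use reach_within_singleton_0_le[OF assms] in blast)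
  with escape_bound_le[of T s] show ?thesis by linarith
qed

lemma drift_divergent:
  assumes drift: "\<And>n. T < n \<Longrightarrow> 2 * Wd n \<le> Wu n"
  shows "divergent Wu Wd s0 {0}"
proof -
  define f0 :: "nat \<Rightarrow> real" where "f0 s = real 1 / real (Suc 0)" for s
  define f1 :: "nat \<Rightarrow> real" where "f1 s = real (T + 1) / real (Suc s)" for s
  have "computable_real_fun f0"
    unfolding f0_def
    by (rule computable_real_fun_ratio[of "pair_rf (const_rf 1) (const_rf 0)"])
      (intro eval_pair_rf eval_const_rf)
  moreover have "computable_real_fun f1"
    unfolding f1_def
    by (rule computable_real_fun_ratio[of "pair_rf (const_rf (T + 1)) (Proj 0)"])
      (auto intro!: eval_pair_rf eval_const_rf eval_Proj_eq)
  moreover have "{s. f0 s \<le> \<theta>} = {}" if "\<theta> < 1" for \<theta>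
    using that by (auto simp: f0_def)
  moreover have "PrF Wu Wd s {0} \<le> f1 s" for s
    unfolding f1_def by (rule PrF_singleton_0_le[OF drift])
  moreover have "finite {s. f1 s \<ge> \<theta>}" if "\<theta> > 0" for \<theta>
  proof (rule finite_subset)
    show "{s. f1 s \<ge> \<theta>} \<subseteq> {..nat \<lceil>real (T + 1) / \<theta>\<rceil>}"
    proof
      fix s assume "s \<in> {s. f1 s \<ge> \<theta>}"
      then have "real (Suc s) \<le> real (T + 1) / \<theta>"
        using that by (simp add: f1_def field_simps)
      then have "real s \<le> real (nat \<lceil>real (T + 1) / \<theta>\<rceil>)"
        using real_nat_ceiling_ge[of "real (T + 1) / \<theta>"] by linarith
      then show "s \<in> {..nat \<lceil>real (T + 1) / \<theta>\<rceil>}"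
        by simp
    qed
  qed simp
  ultimately show ?thesis
    unfolding divergent_def
    by (intro exI[of _ f0] exI[of _ f1]) (auto simp: PrF_empty f0_def f1_def)
qed

end

section \<open>The diagonal walk\<close>

definition unit_weight_prog :: recf where
  "unit_weight_prog = const_rf (prod_encode (1, 1))"

lemma unit_weight_prog: "weight_prog unit_weight_prog" "prog_weight unit_weight_prog = (\<lambda>_. 1)"
proof -
  have eval: "eval unit_weight_prog [n] (prod_encode (1, 1))" for n
    unfolding unit_weight_prog_def by (rule eval_const_rf)
  show "weight_prog unit_weight_prog"
    by (rule weight_progI[OF eval]) (simp add: pos_rat_code_prod_encode)
  show "prog_weight unit_weight_prog = (\<lambda>_. 1)"
    using prog_weight_eq[OF eval] by (simp add: rat_of_code_prod_encode fun_eq_iff)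
qed

definition diagonal_args :: "nat \<Rightarrow> nat list" where
  "diagonal_args c = [c, recf_encode unit_weight_prog, 0, set_encode {0}]"

text \<open>On arguments \<open>[c, n]\<close>, \<open>W\<close> computes \<open>clocked_eval d n (diagonal_args c)\<close>, which is \<open>1\<close>
  exactly when \<open>d\<close> has answered \<open>0\<close> (``not divergent'') within clock \<open>n\<close>.\<close>
definition diagonal_body :: "recf \<Rightarrow> recf" where
  "diagonal_body d =
    (let W = Comp (clocked_rf d 4) [Proj 1, Proj 0, const_rf (recf_encode unit_weight_prog),
               const_rf 0, const_rf (set_encode {0})]
     in cond_rf W (const_rf (prod_encode (1, 1)))
          (cond_rf (dec_rf W) (const_rf (prod_encode (2, 1))) (const_rf (prod_encode (1, 1)))))"

lemma eval_diagonal_body: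
  "eval (diagonal_body d) [c, n]
    (if clocked_eval d n (diagonal_args c) = 1 then prod_encode (2, 1) else prod_encode (1, 1))"
proof -
  let ?v = "clocked_eval d n (diagonal_args c)"
  have "list_all2 (\<lambda>g y. eval g [c, n] y) [Proj 1, Proj 0, const_rf (recf_encode unit_weight_prog),
      const_rf 0, const_rf (set_encode {0})] (n # diagonal_args c)"
    by (auto simp: diagonal_args_def intro!: eval_Proj_eq eval_const_rf)
  from eval_Comp[OF this eval_clocked_rf]
  have W: "eval (Comp (clocked_rf d 4) [Proj 1, Proj 0, const_rf (recf_encode unit_weight_prog),
      const_rf 0, const_rf (set_encode {0})]) [c, n] ?v"
    by (simp add: diagonal_args_def)
  from eval_cond_rf[OF W eval_const_rf eval_cond_rf[OF eval_dec_rf[OF W] eval_const_rf eval_const_rf]]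
  show ?thesis
    unfolding diagonal_body_def Let_def by (cases "?v = 0") auto
qed

definition diagonal_prog :: "recf \<Rightarrow> recf" where
  "diagonal_prog d = fixpoint_prog (diagonal_body d)"

lemma diagonal_prog_weight:
  fixes d :: recf
  defines "args \<equiv> diagonal_args (recf_encode (diagonal_prog d))"
  shows "weight_prog (diagonal_prog d)"
    and "prog_weight (diagonal_prog d) n = (if clocked_eval d n args = 1 then 2 else 1)"
proof -
  have eval: "eval (diagonal_prog d) [n]
      (if clocked_eval d n args = 1 then prod_encode (2, 1) else prod_encode (1, 1))" for n
    unfolding args_def diagonal_prog_def by (rule eval_fixpoint_prog) (rule eval_diagonal_body)
  show "weight_prog (diagonal_prog d)"
    by (rule weight_progI[OF eval]) (simp add: pos_rat_code_prod_encode)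
  show "prog_weight (diagonal_prog d) n = (if clocked_eval d n args = 1 then 2 else 1)"
    by (simp add: prog_weight_eq[OF eval] rat_of_code_prod_encode)
qed

lemma diagonal_prog_refutes:
  fixes d :: recf
  defines "Wu \<equiv> prog_weight (diagonal_prog d)"
    and "args \<equiv> diagonal_args (recf_encode (diagonal_prog d))"
  shows "\<not> eval d args (if divergent Wu (\<lambda>_. 1) 0 {0} then 1 else 0)"
proof
  assume d_on_diagonal: "eval d args (if divergent Wu (\<lambda>_. 1) 0 {0} then 1 else 0)"
  have Wu: "Wu n = (if clocked_eval d n args = 1 then 2 else 1)" for n
    unfolding Wu_def args_def by (rule diagonal_prog_weight(2))
  interpret random_walk Wu "\<lambda>_. 1"
    by unfold_locales (simp_all add: Wu)
  show False
  proof (cases "divergent Wu (\<lambda>_. 1) 0 {0}")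
    case True
    then have "clocked_eval d n args \<noteq> 1" for n
      using clocked_eval_consistent[OF d_on_diagonal, of n 0] by auto
    then have "Wu n = 1" for n
      by (simp add: Wu)
    with True balanced_not_divergent[of "{0}" 0] show False by simp
  next
    case False
    with clocked_eval_complete[OF d_on_diagonal]
    obtain T where "\<And>n. n \<ge> T \<Longrightarrow> clocked_eval d n args = 1"
      by (auto simp: eventually_sequentially)
    then have "2 * 1 \<le> Wu n" if "T < n" for n
      using that by (simp add: Wu)
    with False drift_divergent[of T 0] show False by simp
  qed
qed

theorem theorem1:
  shows "\<not> (\<exists>d. \<forall>pu pd s0 A.
            weight_prog pu \<and> weight_prog pd \<and> finite A \<longrightarrow>
            eval d [recf_encode pu, recf_encode pd, s0, set_encode A]
              (if divergent (prog_weight pu) (prog_weight pd) s0 A then 1 else 0))"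
proof (intro notI, elim exE)
  fix d
  assume "\<forall>pu pd s0 A. weight_prog pu \<and> weight_prog pd \<and> finite A \<longrightarrow>
    eval d [recf_encode pu, recf_encode pd, s0, set_encode A]
      (if divergent (prog_weight pu) (prog_weight pd) s0 A then 1 else 0)"
  from this[rule_format, of "diagonal_prog d" unit_weight_prog "{0}" 0] diagonal_prog_refutes[of d]
  show False
    by (simp add: diagonal_prog_weight(1) unit_weight_prog diagonal_args_def)
qed

end
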